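(* Let $\Gamma$ be a torsion-free word hyperbolic group and $\langle w \rangle$ a maximal cyclic subgroup of $\Gamma$. Suppose that $\rho:\Gamma \to \mathsf{GL}(d, \mathbb{R})$ is a projective Anosov representation. Then there exists $h \in \mathsf{GL}(d, \mathbb{R})$ such that for every $g \in \Gamma \smallsetminus \langle w \rangle$, the $(1,1)$, $(1,d)$, $(d,1)$ and $(d,d)$ entries of the matrix $h\rho(g)h^{-1}$ are non-zero.
   Context: Fix a word length $|\cdot|$ on $\Gamma$. For a matrix $A$, $\sigma_1(A)\ge\sigma_2(A)\ge\dots$ denote its singular values. A representation $\rho:\Gamma\to\mathsf{GL}(d,\mathbb R)$ is projective Anosov if there are constants $C,a>0$ with $\sigma_1(\rho(\gamma))/\sigma_2(\rho(\gamma))\ge Ce^{a|\gamma|}$ for all $\gamma\in\Gamma$. A cyclic subgroup is maximal if it is not contained in a strictly larger cyclic subgroup. *)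

theory Defs
  imports "HOL-Algebra.Group" "HOL-Algebra.Generated_Groups" "Jordan_Normal_Form.Char_Poly"
    "HOL-Computational_Algebra.Polynomial"
begin

definition word_length :: "('g, 'b) monoid_scheme \<Rightarrow> 'g set \<Rightarrow> 'g \<Rightarrow> nat" where
  "word_length G S g = (LEAST n. \<exists>ws. length ws = n \<and> set ws \<subseteq> S \<union> (\<lambda>s. inv\<^bsub>G\<^esub> s) ` S
       \<and> foldr (\<lambda>x y. x \<otimes>\<^bsub>G\<^esub> y) ws \<one>\<^bsub>G\<^esub> = g)"

definition word_dist :: "('g, 'b) monoid_scheme \<Rightarrow> 'g set \<Rightarrow> 'g \<Rightarrow> 'g \<Rightarrow> real" where
  "word_dist G S x y = real (word_length G S (inv\<^bsub>G\<^esub> x \<otimes>\<^bsub>G\<^esub> y))"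

definition gromov_product :: "('g, 'b) monoid_scheme \<Rightarrow> 'g set \<Rightarrow> 'g \<Rightarrow> 'g \<Rightarrow> 'g \<Rightarrow> real" where
  "gromov_product G S w x y = (word_dist G S x w + word_dist G S y w - word_dist G S x y) / 2"

definition finite_generating_set :: "('g, 'b) monoid_scheme \<Rightarrow> 'g set \<Rightarrow> bool" where
  "finite_generating_set G S \<longleftrightarrow> finite S \<and> S \<subseteq> carrier G \<and> generate G S = carrier G"

text \<open>Word hyperbolic: the word metric (equivalently the Cayley graph) is Gromov hyperbolic,
  stated via the four-point condition on Gromov products.\<close>
definition word_hyperbolic :: "('g, 'b) monoid_scheme \<Rightarrow> 'g set \<Rightarrow> bool" where
  "word_hyperbolic G S \<longleftrightarrow> group G \<and> finite_generating_set G S \<and>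
     (\<exists>\<delta>::real. \<delta> \<ge> 0 \<and> (\<forall>w\<in>carrier G. \<forall>x\<in>carrier G. \<forall>y\<in>carrier G. \<forall>z\<in>carrier G.
        gromov_product G S w x z \<ge> min (gromov_product G S w x y) (gromov_product G S w y z) - \<delta>))"

definition torsion_free :: "('g, 'b) monoid_scheme \<Rightarrow> bool" where
  "torsion_free G \<longleftrightarrow> (\<forall>g\<in>carrier G. g \<noteq> \<one>\<^bsub>G\<^esub> \<longrightarrow> (\<forall>n::nat. n > 0 \<longrightarrow> g [^]\<^bsub>G\<^esub> n \<noteq> \<one>\<^bsub>G\<^esub>))"

definition maximal_cyclic :: "('g, 'b) monoid_scheme \<Rightarrow> 'g \<Rightarrow> bool" where
  "maximal_cyclic G w \<longleftrightarrow> w \<in> carrier G \<and>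
     (\<forall>u\<in>carrier G. generate G {w} \<subseteq> generate G {u} \<longrightarrow> generate G {w} = generate G {u})"

definition singular_values :: "real mat \<Rightarrow> real list" where
  "singular_values A = map sqrt (rev (sorted_list_of_multiset (proots (char_poly (transpose_mat A * A)))))"

text \<open>sigma k A for k \<ge> 1 is the k-th largest singular value.\<close>
definition sigma :: "nat \<Rightarrow> real mat \<Rightarrow> real" where
  "sigma k A = singular_values A ! (k - 1)"

definition GL_rep :: "('g, 'b) monoid_scheme \<Rightarrow> nat \<Rightarrow> ('g \<Rightarrow> real mat) \<Rightarrow> bool" where
  "GL_rep G d \<rho> \<longleftrightarrow> (\<forall>g\<in>carrier G. \<rho> g \<in> carrier_mat d d \<and> invertible_mat (\<rho> g)) \<and>
     (\<forall>g\<in>carrier G. \<forall>h\<in>carrier G. \<rho> (g \<otimes>\<^bsub>G\<^esub> h) = \<rho> g * \<rho> h)"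

definition projective_anosov :: "('g, 'b) monoid_scheme \<Rightarrow> 'g set \<Rightarrow> nat \<Rightarrow> ('g \<Rightarrow> real mat) \<Rightarrow> bool" where
  "projective_anosov G S d \<rho> \<longleftrightarrow> d \<ge> 2 \<and> GL_rep G d \<rho> \<and>
     (\<exists>C a::real. C > 0 \<and> a > 0 \<and> (\<forall>g\<in>carrier G.
        sigma 1 (\<rho> g) / sigma 2 (\<rho> g) \<ge> C * exp (a * real (word_length G S g))))"

end

(* For g distinct from the identity, rho g is not a scalar matrix: otherwise every positive
   power of g would have scalar image, hence singular value ratio at most 1, hence word length
   bounded by the Anosov estimate; but balls of the word metric are finite, and torsion-freeness
   makes the powers pairwise distinct. A non-scalar matrix has, for every position (i, j), a
   conjugate whose (i, j) entry is non-zero (elementary similarities suffice). The (i, j) entry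
   of h A adj(h) is a polynomial in the entries of h, hence not identically zero; as Gamma is
   countable, a point h avoids the countably many zero sets of these polynomials and of det h,
   since the reals are uncountable. Thus only finite generation is used from hyperbolicity, and
   the conclusion holds for every g other than the identity, not only for g outside <w>. *)

theory Submission
  imports Defs "HOL-Analysis.Continuum_Not_Denumerable" "Jordan_Normal_Form.Column_Operations"
begin

text \<open>Points of real n-space are encoded as functions nat => real whose coordinates from n on
  are ignored.\<close>
inductive polyfun :: "nat \<Rightarrow> ((nat \<Rightarrow> real) \<Rightarrow> real) \<Rightarrow> bool" for n where
  polyfun_const: "polyfun n (\<lambda>x. c)"
| polyfun_var: "i < n \<Longrightarrow> polyfun n (\<lambda>x. x i)"
| polyfun_add: "polyfun n p \<Longrightarrow> polyfun n q \<Longrightarrow> polyfun n (\<lambda>x. p x + q x)"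
| polyfun_mult: "polyfun n p \<Longrightarrow> polyfun n q \<Longrightarrow> polyfun n (\<lambda>x. p x * q x)"

lemma polyfun_sum:
  "finite A \<Longrightarrow> (\<And>a. a \<in> A \<Longrightarrow> polyfun n (f a)) \<Longrightarrow> polyfun n (\<lambda>x. \<Sum>a\<in>A. f a x)"
  by (induction A rule: finite_induct) (auto intro: polyfun.intros)

lemma polyfun_prod:
  "finite A \<Longrightarrow> (\<And>a. a \<in> A \<Longrightarrow> polyfun n (f a)) \<Longrightarrow> polyfun n (\<lambda>x. \<Prod>a\<in>A. f a x)"
  by (induction A rule: finite_induct) (auto intro: polyfun.intros)

lemma polyfun_eqI: "polyfun n p \<Longrightarrow> (\<And>i. i < n \<Longrightarrow> x i = y i) \<Longrightarrow> p x = p y"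
  by (induction rule: polyfun.induct) auto

lemma polyfun_Suc_as_poly:
  assumes "polyfun (Suc n) p"
  obtains Q where "\<And>k. polyfun n (\<lambda>x. coeff (Q x) k)" and "\<And>x. p x = poly (Q x) (x n)"
proof -
  from assms have "\<exists>Q. (\<forall>k. polyfun n (\<lambda>x. coeff (Q x) k)) \<and> (\<forall>x. p x = poly (Q x) (x n))"
  proof (induction rule: polyfun.induct)
    case (polyfun_const c)
    show ?case
      by (rule exI[of _ "\<lambda>x. [:c:]"]) (auto simp: coeff_pCons split: nat.split intro: polyfun.intros)
  next
    case (polyfun_var i)
    show ?case
    proof (cases "i = n")
      case True
      then show ?thesis
        by (intro exI[of _ "\<lambda>x. [:0, 1:]"])
          (auto simp: coeff_pCons split: nat.split intro: polyfun.intros)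
    next
      case False
      with polyfun_var have "i < n" by simp
      then have "polyfun n (\<lambda>x. coeff [:x i:] k)" for k
        by (cases k) (auto intro: polyfun.intros)
      then show ?thesis by (intro exI[of _ "\<lambda>x. [:x i:]"]) simp
    qed
  next
    case (polyfun_add p q)
    then obtain P Q where "\<forall>k. polyfun n (\<lambda>x. coeff (P x) k)" "\<forall>x. p x = poly (P x) (x n)"
      "\<forall>k. polyfun n (\<lambda>x. coeff (Q x) k)" "\<forall>x. q x = poly (Q x) (x n)" by blast
    then show ?case by (intro exI[of _ "\<lambda>x. P x + Q x"]) (auto intro: polyfun.intros)
  next
    case (polyfun_mult p q)
    then obtain P Q where P: "\<forall>k. polyfun n (\<lambda>x. coeff (P x) k)" "\<forall>x. p x = poly (P x) (x n)"
      and Q: "\<forall>k. polyfun n (\<lambda>x. coeff (Q x) k)" "\<forall>x. q x = poly (Q x) (x n)" by blast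
    have "polyfun n (\<lambda>x. coeff (P x * Q x) k)" for k
      unfolding coeff_mult using P Q by (intro polyfun_sum) (auto intro: polyfun.intros)
    with P Q show ?case by (intro exI[of _ "\<lambda>x. P x * Q x"]) auto
  qed
  with that show ?thesis by blast
qed

lemma countable_polys_common_nonroot:
  fixes P :: "real poly set"
  assumes "countable P" and "0 \<notin> P"
  shows "\<exists>t. \<forall>q\<in>P. poly q t \<noteq> 0"
proof -
  have "countable (\<Union>q\<in>P. {t. poly q t = 0})"
    using assms by (intro countable_UN) (auto intro: countable_finite poly_roots_finite)
  then obtain t where "t \<notin> (\<Union>q\<in>P. {t. poly q t = 0})"
    using uncountable_UNIV_real by (metis UNIV_I subsetI countable_subset)
  then show ?thesis by blast
qed

text \<open>Induction on the number of variables: the coefficients of the last variable are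
  again polynomial functions, so a common non-zero of suitable coefficients is found first,
  and then the last variable avoids the countably many roots of the resulting polynomials.\<close>
lemma countable_polyfuns_common_nonzero:
  assumes "countable F" and "\<And>p. p \<in> F \<Longrightarrow> polyfun n p" and "\<And>p. p \<in> F \<Longrightarrow> \<exists>x. p x \<noteq> 0"
  shows "\<exists>x. \<forall>p\<in>F. p x \<noteq> 0"
  using assms
proof (induction n arbitrary: F)
  case 0
  have "p undefined \<noteq> 0" if "p \<in> F" for p
  proof -
    obtain x where "p x \<noteq> 0" using 0(3) \<open>p \<in> F\<close> by blast
    then show ?thesis using polyfun_eqI[OF 0(2)[OF \<open>p \<in> F\<close>], of undefined x] by simp
  qed
  then show ?case by blast
next
  case (Suc n)
  have "\<exists>Q k. (\<forall>k. polyfun n (\<lambda>x. coeff (Q x) k)) \<and> (\<forall>x. p x = poly (Q x) (x n)) \<and>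
      (\<exists>x. coeff (Q x) k \<noteq> 0)" if pF: "p \<in> F" for p
  proof -
    obtain Q where Q: "\<And>k. polyfun n (\<lambda>x. coeff (Q x) k)" "\<And>x. p x = poly (Q x) (x n)"
      using polyfun_Suc_as_poly[OF Suc.prems(2)[OF pF]] by blast
    obtain x where "p x \<noteq> 0" using Suc.prems(3) \<open>p \<in> F\<close> by blast
    then have "Q x \<noteq> 0" using Q by auto
    then obtain k where "coeff (Q x) k \<noteq> 0" by (metis leading_coeff_0_iff)
    with Q show ?thesis by blast
  qed
  then obtain Q K where Q: "\<And>p k. p \<in> F \<Longrightarrow> polyfun n (\<lambda>x. coeff (Q p x) k)"
    and p_eq: "\<And>p x. p \<in> F \<Longrightarrow> p x = poly (Q p x) (x n)"
    and K: "\<And>p. p \<in> F \<Longrightarrow> \<exists>x. coeff (Q p x) (K p) \<noteq> 0"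
    by metis
  define C where "C = (\<lambda>p x. coeff (Q p x) (K p)) ` F"
  have C: "countable C" "\<And>c. c \<in> C \<Longrightarrow> polyfun n c" "\<And>c. c \<in> C \<Longrightarrow> \<exists>x. c x \<noteq> 0"
    using Suc.prems(1) Q K unfolding C_def by auto
  obtain x0 where "\<And>c. c \<in> C \<Longrightarrow> c x0 \<noteq> 0" using Suc.IH[OF C] by blast
  then have x0: "\<And>p. p \<in> F \<Longrightarrow> coeff (Q p x0) (K p) \<noteq> 0" unfolding C_def by auto
  have "countable ((\<lambda>p. Q p x0) ` F)" using Suc.prems(1) by simp
  moreover have "0 \<notin> (\<lambda>p. Q p x0) ` F" using x0 by force
  ultimately have "\<exists>t. \<forall>q\<in>(\<lambda>p. Q p x0) ` F. poly q t \<noteq> 0"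
    by (rule countable_polys_common_nonroot)
  then obtain t where t: "\<And>p. p \<in> F \<Longrightarrow> poly (Q p x0) t \<noteq> 0" by auto
  have Q_local: "Q p (x0(n := t)) = Q p x0" if "p \<in> F" for p
    using polyfun_eqI[OF Q[OF that], of "x0(n := t)" x0] by (intro poly_eqI) simp
  have "p (x0(n := t)) \<noteq> 0" if "p \<in> F" for p
    using that t p_eq[of p "x0(n := t)"] Q_local by simp
  then show ?case by blast
qed

definition polyfun_mat :: "nat \<Rightarrow> nat \<Rightarrow> ((nat \<Rightarrow> real) \<Rightarrow> real mat) \<Rightarrow> bool" where
  "polyfun_mat n d M \<longleftrightarrow>
     (\<forall>x. M x \<in> carrier_mat d d) \<and> (\<forall>i<d. \<forall>j<d. polyfun n (\<lambda>x. M x $$ (i, j)))"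

lemma polyfun_matD:
  assumes "polyfun_mat n d M"
  shows "M x \<in> carrier_mat d d" and "i < d \<Longrightarrow> j < d \<Longrightarrow> polyfun n (\<lambda>x. M x $$ (i, j))"
  using assms unfolding polyfun_mat_def by auto

lemma polyfun_mat_const: "A \<in> carrier_mat d d \<Longrightarrow> polyfun_mat n d (\<lambda>x. A)"
  unfolding polyfun_mat_def by (auto intro: polyfun_const)

lemma polyfun_mat_mult:
  assumes M: "polyfun_mat n d M" and N: "polyfun_mat n d N"
  shows "polyfun_mat n d (\<lambda>x. M x * N x)"
  unfolding polyfun_mat_def
proof (intro conjI allI impI)
  show "M x * N x \<in> carrier_mat d d" for x
    using polyfun_matD(1)[OF M] polyfun_matD(1)[OF N] by (rule mult_carrier_mat)
  fix i j assume "i < d" "j < d"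
  moreover have "(M x * N x) $$ (i, j) = (\<Sum>k\<in>{0..<d}. M x $$ (i, k) * N x $$ (k, j))" for x
    using \<open>i < d\<close> \<open>j < d\<close> polyfun_matD(1)[OF M, of x] polyfun_matD(1)[OF N, of x]
    by (auto simp: scalar_prod_def)
  ultimately show "polyfun n (\<lambda>x. (M x * N x) $$ (i, j))"
    by (auto intro!: polyfun_sum polyfun_mult polyfun_matD(2)[OF M] polyfun_matD(2)[OF N])
qed

lemma polyfun_det:
  assumes M: "polyfun_mat n d M"
  shows "polyfun n (\<lambda>x. det (M x))"
proof -
  have "det (M x) = (\<Sum>p\<in>{p. p permutes {0..<d}}. signof p * (\<Prod>i = 0..<d. M x $$ (i, p i)))" for x
    using polyfun_matD(1)[OF M, of x] unfolding det_def by auto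
  moreover have "p permutes {0..<d} \<Longrightarrow> i < d \<Longrightarrow> p i < d" for p i
    by (auto simp: permutes_in_image)
  ultimately show ?thesis
    by (auto simp: finite_permutations
        intro!: polyfun_sum polyfun_mult polyfun_const polyfun_prod polyfun_matD(2)[OF M])
qed

lemma polyfun_mat_delete:
  assumes M: "polyfun_mat n d M"
  shows "polyfun_mat n (d - 1) (\<lambda>x. mat_delete (M x) k l)"
  unfolding polyfun_mat_def
proof (intro conjI allI impI)
  show "mat_delete (M x) k l \<in> carrier_mat (d - 1) (d - 1)" for x
    using polyfun_matD(1)[OF M] by (rule mat_delete_carrier)
  fix i j assume ij: "i < d - 1" "j < d - 1"
  define i' j' where "i' = (if i < k then i else Suc i)" and "j' = (if j < l then j else Suc j)"
  have "mat_delete (M x) k l $$ (i, j) = M x $$ (i', j')" for x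
    using ij polyfun_matD(1)[OF M, of x] by (simp add: mat_delete_def i'_def j'_def)
  moreover have "i' < d" "j' < d" using ij by (auto simp: i'_def j'_def)
  ultimately show "polyfun n (\<lambda>x. mat_delete (M x) k l $$ (i, j))"
    using polyfun_matD(2)[OF M] by simp
qed

lemma polyfun_mat_adj:
  assumes M: "polyfun_mat n d M"
  shows "polyfun_mat n d (\<lambda>x. adj_mat (M x))"
  unfolding polyfun_mat_def
proof (intro conjI allI impI)
  show "adj_mat (M x) \<in> carrier_mat d d" for x
    using polyfun_matD(1)[OF M] by (rule adj_mat(1))
  fix i j assume "i < d" "j < d"
  then have "adj_mat (M x) $$ (i, j) = (-1) ^ (j + i) * det (mat_delete (M x) j i)" for x
    using polyfun_matD(1)[OF M, of x] by (simp add: adj_mat_def cofactor_def)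
  then show "polyfun n (\<lambda>x. adj_mat (M x) $$ (i, j))"
    by (simp add: polyfun_const polyfun_mult polyfun_det[OF polyfun_mat_delete[OF M]])
qed

definition mat_of_coords :: "nat \<Rightarrow> (nat \<Rightarrow> real) \<Rightarrow> real mat" where
  "mat_of_coords d x = mat d d (\<lambda>(i, j). x (i * d + j))"

lemma mat_of_coords_carrier [simp]: "mat_of_coords d x \<in> carrier_mat d d"
  by (simp add: mat_of_coords_def)

lemma polyfun_mat_of_coords: "polyfun_mat (d * d) d (mat_of_coords d)"
proof -
  have "i * d + j < d * d" if "i < d" "j < d" for i j :: nat
  proof -
    have "i * d + j < Suc i * d" using that by simp
    also have "\<dots> \<le> d * d" by (rule mult_le_mono1) (use that in simp)
    finally show ?thesis .
  qed
  then show ?thesis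
    unfolding polyfun_mat_def mat_of_coords_def by (auto intro: polyfun_var)
qed

lemma mat_of_coords_entries:
  "A \<in> carrier_mat d d \<Longrightarrow> mat_of_coords d (\<lambda>k. A $$ (k div d, k mod d)) = A"
  by (rule eq_matI) (auto simp: mat_of_coords_def)

lemma adj_mat_eq_det_smult_inverse:
  assumes P: "P \<in> carrier_mat n n" and Q: "Q \<in> carrier_mat n n" and "P * Q = 1\<^sub>m n"
  shows "adj_mat P = det P \<cdot>\<^sub>m Q"
proof -
  have "adj_mat P = adj_mat P * (P * Q)" using assms adj_mat(1)[OF P] by simp
  also have "\<dots> = (adj_mat P * P) * Q" using P Q adj_mat(1)[OF P] by (simp add: assoc_mult_mat)
  also have "\<dots> = det P \<cdot>\<^sub>m Q"
    using P Q adj_mat(3)[OF P] mult_smult_assoc_mat[of "1\<^sub>m n" n n Q n "det P"] by simp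
  finally show ?thesis .
qed

lemma inverse_by_adj_mat:
  fixes A :: "'a :: field mat"
  assumes A: "A \<in> carrier_mat n n" and "det A \<noteq> 0"
  shows "A * ((1 / det A) \<cdot>\<^sub>m adj_mat A) = 1\<^sub>m n" and "((1 / det A) \<cdot>\<^sub>m adj_mat A) * A = 1\<^sub>m n"
proof -
  have "(1 / det A) \<cdot>\<^sub>m (det A \<cdot>\<^sub>m 1\<^sub>m n) = 1\<^sub>m n" using \<open>det A \<noteq> 0\<close> by (intro eq_matI) (auto simp: field_simps)
  then show "A * ((1 / det A) \<cdot>\<^sub>m adj_mat A) = 1\<^sub>m n" and "((1 / det A) \<cdot>\<^sub>m adj_mat A) * A = 1\<^sub>m n"
    using A adj_mat[OF A] by (simp_all add: mult_smult_distrib mult_smult_assoc_mat)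
qed

lemma similar_mat_carrier:
  assumes "similar_mat B A" and "A \<in> carrier_mat n n"
  shows "B \<in> carrier_mat n n"
proof -
  from similar_matD[OF assms(1)] obtain m P Q where "{B, A, P, Q} \<subseteq> carrier_mat m m" by blast
  with assms(2) show ?thesis by auto
qed

lemma polyfun_adj_conjugate_entry:
  assumes "A \<in> carrier_mat d d" and "i < d" and "j < d"
  shows "polyfun (d * d) (\<lambda>x. (mat_of_coords d x * A * adj_mat (mat_of_coords d x)) $$ (i, j))"
proof -
  have "polyfun_mat (d * d) d (\<lambda>x. mat_of_coords d x * A * adj_mat (mat_of_coords d x))"
    using assms(1) by (intro polyfun_mat_mult polyfun_mat_const polyfun_mat_adj polyfun_mat_of_coords)
  then show ?thesis using assms(2,3) by (rule polyfun_matD(2))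
qed

lemma similar_mat_adj_conjugate:
  assumes "similar_mat B A" and A: "A \<in> carrier_mat d d"
  obtains P where "P \<in> carrier_mat d d" and "det P \<noteq> 0" and "P * A * adj_mat P = det P \<cdot>\<^sub>m B"
proof -
  from similar_matD[OF assms(1)] obtain n P Q where carrier: "{B, A, P, Q} \<subseteq> carrier_mat n n"
    and PQ: "P * Q = 1\<^sub>m n" "Q * P = 1\<^sub>m n" and B: "B = P * A * Q"
    by blast
  have "n = d" using carrier A by auto
  with carrier have P: "P \<in> carrier_mat d d" and Q: "Q \<in> carrier_mat d d" by auto
  have "det P * det Q = 1" using det_mult[OF P Q] PQ \<open>n = d\<close> by simp
  moreover have "P * A * adj_mat P = det P \<cdot>\<^sub>m B"
    using P Q A PQ \<open>n = d\<close> mult_smult_distrib[of "P * A" d d Q d "det P"]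
    by (simp add: B adj_mat_eq_det_smult_inverse[of P d Q])
  ultimately show ?thesis using that P by force
qed

lemma ex_conjugate_entries_nonzero:
  fixes \<A> :: "real mat set"
  assumes "countable \<A>" and \<A>: "\<A> \<subseteq> carrier_mat d d"
    and nonzero: "\<And>A i j. A \<in> \<A> \<Longrightarrow> i < d \<Longrightarrow> j < d \<Longrightarrow> \<exists>B. similar_mat B A \<and> B $$ (i, j) \<noteq> 0"
  shows "\<exists>h hinv. h \<in> carrier_mat d d \<and> hinv \<in> carrier_mat d d \<and>
    h * hinv = 1\<^sub>m d \<and> hinv * h = 1\<^sub>m d \<and> (\<forall>A\<in>\<A>. \<forall>i<d. \<forall>j<d. (h * A * hinv) $$ (i, j) \<noteq> 0)"
proof -
  let ?H = "mat_of_coords d"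
  define entry where "entry = (\<lambda>(A, i, j) x. (?H x * A * adj_mat (?H x)) $$ (i, j))"
  define F where "F = insert (\<lambda>x. det (?H x)) (entry ` (\<A> \<times> {..<d} \<times> {..<d}))"
  have "\<exists>x. entry (A, i, j) x \<noteq> 0" if AAij: "A \<in> \<A>" "i < d" "j < d" for A i j
  proof -
    obtain B where "similar_mat B A" and "B $$ (i, j) \<noteq> 0" using nonzero[OF AAij] by blast
    moreover obtain P where "P \<in> carrier_mat d d" "det P \<noteq> 0" "P * A * adj_mat P = det P \<cdot>\<^sub>m B"
      using similar_mat_adj_conjugate \<open>similar_mat B A\<close> \<A> \<open>A \<in> \<A>\<close> by blast
    moreover have "B \<in> carrier_mat d d" using similar_mat_carrier \<open>similar_mat B A\<close> \<A> \<open>A \<in> \<A>\<close> by blast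
    ultimately show ?thesis
      using AAij by (intro exI[of _ "\<lambda>k. P $$ (k div d, k mod d)"]) (auto simp: entry_def mat_of_coords_entries)
  qed
  moreover have "det (?H (\<lambda>k. 1\<^sub>m d $$ (k div d, k mod d))) \<noteq> 0"
    by (subst mat_of_coords_entries) auto
  moreover have "polyfun (d * d) (\<lambda>x. det (?H x))" by (rule polyfun_det[OF polyfun_mat_of_coords])
  moreover have "polyfun (d * d) (entry (A, i, j))" if "A \<in> \<A>" "i < d" "j < d" for A i j
    using polyfun_adj_conjugate_entry that \<A> by (auto simp: entry_def)
  moreover have "countable F" unfolding F_def using \<open>countable \<A>\<close> by simp
  ultimately obtain x where x: "\<forall>p\<in>F. p x \<noteq> 0"
    using countable_polyfuns_common_nonzero[of F "d * d"] unfolding F_def by blast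
  define h where "h = ?H x"
  define hinv where "hinv = (1 / det h) \<cdot>\<^sub>m adj_mat h"
  have h: "h \<in> carrier_mat d d" by (simp add: h_def)
  then have hinv: "hinv \<in> carrier_mat d d" using adj_mat(1)[OF h] by (simp add: hinv_def)
  have "det h \<noteq> 0" using x unfolding F_def h_def by simp
  have "(h * A * hinv) $$ (i, j) \<noteq> 0" if A: "A \<in> \<A>" and ij: "i < d" "j < d" for A i j
  proof -
    have "entry (A, i, j) \<in> F" using that unfolding F_def by simp
    with x have "(h * A * adj_mat h) $$ (i, j) \<noteq> 0" unfolding entry_def h_def by fastforce
    moreover have "h * A \<in> carrier_mat d d" using h A \<A> by auto
    then have "h * A * hinv = (1 / det h) \<cdot>\<^sub>m (h * A * adj_mat h)"
      unfolding hinv_def using adj_mat(1)[OF h] by (rule mult_smult_distrib)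
    ultimately show ?thesis using \<open>det h \<noteq> 0\<close> ij h adj_mat(1)[OF h] by simp
  qed
  with h hinv inverse_by_adj_mat[OF h \<open>det h \<noteq> 0\<close>, folded hinv_def] show ?thesis by blast
qed

lemma ex_similar_mat_offdiag_nonzero:
  fixes A :: "'a :: comm_ring_1 mat"
  assumes A: "A \<in> carrier_mat n n" and nonscalar: "\<forall>c. A \<noteq> c \<cdot>\<^sub>m 1\<^sub>m n"
  shows "\<exists>B k l. similar_mat B A \<and> k < n \<and> l < n \<and> k \<noteq> l \<and> B $$ (k, l) \<noteq> 0"
proof (cases "\<exists>k<n. \<exists>l<n. k \<noteq> l \<and> A $$ (k, l) \<noteq> 0")
  case True
  then show ?thesis using similar_mat_refl[OF A] by blast
next
  case False
  have "\<exists>k<n. \<exists>l<n. A $$ (k, k) \<noteq> A $$ (l, l)"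
  proof (rule ccontr)
    assume same: "\<not> ?thesis"
    have diag: "A $$ (k, k) = A $$ (0, 0)" if "k < n" for k
    proof -
      have "0 < n" using that by simp
      with same that show ?thesis by blast
    qed
    have "A = A $$ (0, 0) \<cdot>\<^sub>m 1\<^sub>m n"
    proof (rule eq_matI)
      fix i j assume "i < dim_row (A $$ (0, 0) \<cdot>\<^sub>m 1\<^sub>m n)" "j < dim_col (A $$ (0, 0) \<cdot>\<^sub>m 1\<^sub>m n)"
      then have "i < n" "j < n" by auto
      with diag[of i] False show "A $$ (i, j) = (A $$ (0, 0) \<cdot>\<^sub>m 1\<^sub>m n) $$ (i, j)"
        by (cases "i = j") auto
    qed (use A in auto)
    with nonscalar show False by blast
  qed
  then obtain k l where kl: "k < n" "l < n" "A $$ (k, k) \<noteq> A $$ (l, l)" by blast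
  then have "k \<noteq> l" by auto
  moreover have "A $$ (k, l) = 0" "A $$ (l, k) = 0" using False kl \<open>k \<noteq> l\<close> by auto
  ultimately have "add_col_sub_row 1 k l A $$ (k, l) \<noteq> 0"
    using kl \<open>k \<noteq> l\<close> A by simp
  with add_col_sub_row_similar[OF A kl(1,2) \<open>k \<noteq> l\<close>] kl \<open>k \<noteq> l\<close> show ?thesis
    by (intro exI[of _ "add_col_sub_row 1 k l A"] exI[of _ k] exI[of _ l]) simp
qed

lemma similar_mat_move_offdiag:
  assumes A: "A \<in> carrier_mat n n" and kl: "k < n" "l < n" "k \<noteq> l" and ij: "i < n" "j < n" "i \<noteq> j"
  shows "\<exists>B. similar_mat B A \<and> B $$ (i, j) = A $$ (k, l)"
proof -
  define l' where "l' = (if l = i then k else if l = k then i else l)"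
  have l': "l' < n" "l' \<noteq> i" using kl ij by (auto simp: l'_def)
  define C where "C = swap_cols_rows i k A"
  have C: "C \<in> carrier_mat n n" "similar_mat C A" "C $$ (i, l') = A $$ (k, l)"
    using A kl ij swap_cols_rows_similar[OF A ij(1) kl(1)] by (auto simp: C_def l'_def)
  define D where "D = swap_cols_rows j l' C"
  have "similar_mat D C" "D $$ (i, j) = C $$ (i, l')"
    using C(1) l' ij swap_cols_rows_similar[OF C(1) ij(2) l'(1)] by (auto simp: D_def)
  with C show ?thesis by (intro exI[of _ D]) (simp add: similar_mat_trans[of D C A])
qed

lemma ex_similar_mat_entry_nonzero:
  fixes A :: "'a :: field mat"
  assumes A: "A \<in> carrier_mat n n" and nonscalar: "\<forall>c. A \<noteq> c \<cdot>\<^sub>m 1\<^sub>m n" and ij: "i < n" "j < n"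
  shows "\<exists>B. similar_mat B A \<and> B $$ (i, j) \<noteq> 0"
proof -
  obtain B k l where B: "similar_mat B A" and kl: "k < n" "l < n" "k \<noteq> l" "B $$ (k, l) \<noteq> 0"
    using ex_similar_mat_offdiag_nonzero[OF A nonscalar] by blast
  have B_carrier: "B \<in> carrier_mat n n" using B A by (rule similar_mat_carrier)
  show ?thesis
  proof (cases "i = j")
    case False
    then obtain C where C: "similar_mat C B" "C $$ (i, j) = B $$ (k, l)"
      using similar_mat_move_offdiag[OF B_carrier kl(1-3) ij] by blast
    with B kl(4) show ?thesis by (intro exI[of _ C]) (simp add: similar_mat_trans[OF C(1) B])
  next
    case True
    define m where "m = (if k = i then l else k)"
    have m: "m < n" "i \<noteq> m" using kl by (auto simp: m_def)
    then obtain C where C: "similar_mat C B" "C $$ (m, i) = B $$ (k, l)"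
      using similar_mat_move_offdiag[OF B_carrier kl(1-3) m(1) ij(1)] by blast
    have C_carrier: "C \<in> carrier_mat n n" using C(1) B_carrier by (rule similar_mat_carrier)
    define a where "a = (C $$ (i, i) - 1) / C $$ (m, i)"
    have "add_col_sub_row a i m C $$ (i, i) = C $$ (i, i) - a * C $$ (m, i)"
      using C_carrier ij m by simp
    also have "\<dots> = 1" using C(2) kl(4) by (simp add: a_def)
    finally have "add_col_sub_row a i m C $$ (i, j) \<noteq> 0" using True by simp
    moreover have "similar_mat (add_col_sub_row a i m C) A"
      using add_col_sub_row_similar[OF C_carrier ij(1) m] similar_mat_trans[OF C(1) B]
      by (rule similar_mat_trans)
    ultimately show ?thesis by blast
  qed
qed

lemma (in group) word_product_closed: "set ws \<subseteq> carrier G \<Longrightarrow> foldr (\<otimes>) ws \<one> \<in> carrier G"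
  by (induction ws) auto

lemma (in group) word_product_append:
  assumes "set xs \<subseteq> carrier G" and "set ys \<subseteq> carrier G"
  shows "foldr (\<otimes>) (xs @ ys) \<one> = foldr (\<otimes>) xs \<one> \<otimes> foldr (\<otimes>) ys \<one>"
  using assms by (induction xs) (auto simp: m_assoc word_product_closed)

lemma (in group) generate_imp_word:
  assumes S: "S \<subseteq> carrier G" and "g \<in> generate G S"
  shows "\<exists>ws. set ws \<subseteq> S \<union> m_inv G ` S \<and> foldr (\<otimes>) ws \<one> = g"
  using \<open>g \<in> generate G S\<close>
proof (induction rule: generate.induct)
  case one
  show ?case by (intro exI[of _ "[]"]) simp
next
  case (incl h)
  with S show ?case by (intro exI[of _ "[h]"]) auto
next
  case (inv h)
  with S show ?case by (intro exI[of _ "[inv h]"]) auto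
next
  case (eng h1 h2)
  then obtain ws1 ws2 where ws: "set ws1 \<subseteq> S \<union> m_inv G ` S" "foldr (\<otimes>) ws1 \<one> = h1"
    "set ws2 \<subseteq> S \<union> m_inv G ` S" "foldr (\<otimes>) ws2 \<one> = h2" by blast
  moreover have "S \<union> m_inv G ` S \<subseteq> carrier G" using S by auto
  ultimately have "set ws1 \<subseteq> carrier G" "set ws2 \<subseteq> carrier G" by auto
  with ws show ?case
    using word_product_append[of ws1 ws2] by (intro exI[of _ "ws1 @ ws2"]) (simp del: foldr_append)
qed

lemma (in group) word_length_witness:
  assumes "finite_generating_set G S" and "g \<in> carrier G"
  shows "\<exists>ws. length ws = word_length G S g \<and> set ws \<subseteq> S \<union> m_inv G ` S \<and> foldr (\<otimes>) ws \<one> = g"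
proof -
  have "\<exists>ws. set ws \<subseteq> S \<union> m_inv G ` S \<and> foldr (\<otimes>) ws \<one> = g"
    using assms generate_imp_word unfolding finite_generating_set_def by auto
  then have "\<exists>n ws. length ws = n \<and> set ws \<subseteq> S \<union> m_inv G ` S \<and> foldr (\<otimes>) ws \<one> = g"
    by blast
  then show ?thesis unfolding word_length_def by (rule LeastI_ex)
qed

lemma (in group) finite_word_length_le:
  assumes "finite_generating_set G S"
  shows "finite {g \<in> carrier G. word_length G S g \<le> R}"
proof -
  have "finite (S \<union> m_inv G ` S)" using assms unfolding finite_generating_set_def by simp
  then have "finite ((\<lambda>ws. foldr (\<otimes>) ws \<one>) ` {ws. set ws \<subseteq> S \<union> m_inv G ` S \<and> length ws \<le> R})"
    by (intro finite_imageI finite_lists_length_le)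
  moreover have "{g \<in> carrier G. word_length G S g \<le> R}
      \<subseteq> (\<lambda>ws. foldr (\<otimes>) ws \<one>) ` {ws. set ws \<subseteq> S \<union> m_inv G ` S \<and> length ws \<le> R}"
  proof
    fix g assume g: "g \<in> {g \<in> carrier G. word_length G S g \<le> R}"
    then obtain ws where "length ws = word_length G S g"
      and "set ws \<subseteq> S \<union> m_inv G ` S" and "foldr (\<otimes>) ws \<one> = g"
      using word_length_witness[OF assms] by blast
    with g show "g \<in> (\<lambda>ws. foldr (\<otimes>) ws \<one>) ` {ws. set ws \<subseteq> S \<union> m_inv G ` S \<and> length ws \<le> R}"
      by (intro image_eqI[of _ _ ws]) auto
  qed
  ultimately show ?thesis by (rule finite_subset[rotated])
qed

lemma (in group) countable_carrier:
  assumes "finite_generating_set G S"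
  shows "countable (carrier G)"
proof -
  have "countable (\<Union>R. {g \<in> carrier G. word_length G S g \<le> R})"
    using finite_word_length_le[OF assms] by (intro countable_UN) (simp_all add: countable_finite)
  moreover have "carrier G \<subseteq> (\<Union>R. {g \<in> carrier G. word_length G S g \<le> R})"
  proof
    fix g assume "g \<in> carrier G"
    then show "g \<in> (\<Union>R. {g \<in> carrier G. word_length G S g \<le> R})"
      by (intro UN_I[of "word_length G S g"]) simp_all
  qed
  ultimately show ?thesis by (rule countable_subset[rotated])
qed

lemma (in group) torsion_free_inj_pow:
  assumes "torsion_free G" and "g \<in> carrier G" and "g \<noteq> \<one>"
  shows "inj (\<lambda>n::nat. g [^] n)"
proof -
  have key: "m = n" if "g [^] m = g [^] n" "n \<le> m" for m n :: nat
  proof -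
    have "g [^] (m - n) = \<one>" using pow_eq_div2[OF \<open>g \<in> carrier G\<close> that(1)] .
    with assms have "\<not> 0 < m - n" unfolding torsion_free_def by blast
    with \<open>n \<le> m\<close> show "m = n" by simp
  qed
  show ?thesis
  proof (rule injI)
    fix m n :: nat assume "g [^] m = g [^] n"
    then show "m = n" using key[of m n] key[of n m] by (cases "n \<le> m") auto
  qed
qed

lemma smult_one_mult_smult_one:
  "(a \<cdot>\<^sub>m 1\<^sub>m n) * (b \<cdot>\<^sub>m 1\<^sub>m n) = ((a * b) :: 'a :: comm_ring_1) \<cdot>\<^sub>m 1\<^sub>m n"
proof -
  have "(a \<cdot>\<^sub>m 1\<^sub>m n) * (b \<cdot>\<^sub>m 1\<^sub>m n) = a \<cdot>\<^sub>m (1\<^sub>m n * (b \<cdot>\<^sub>m 1\<^sub>m n))"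
    by (rule mult_smult_assoc_mat) auto
  also have "\<dots> = (a * b) \<cdot>\<^sub>m 1\<^sub>m n" by (rule eq_matI) auto
  finally show ?thesis .
qed

lemma singular_values_smult_one: "singular_values (c \<cdot>\<^sub>m 1\<^sub>m d) = replicate d \<bar>c\<bar>"
proof -
  have "transpose_mat (c \<cdot>\<^sub>m 1\<^sub>m d) = c \<cdot>\<^sub>m 1\<^sub>m d" by (rule eq_matI) auto
  then have gram: "transpose_mat (c \<cdot>\<^sub>m 1\<^sub>m d) * (c \<cdot>\<^sub>m 1\<^sub>m d) = (c * c) \<cdot>\<^sub>m 1\<^sub>m d"
    by (simp add: smult_one_mult_smult_one)
  have "char_poly ((c * c) \<cdot>\<^sub>m 1\<^sub>m d) = (\<Prod>a\<leftarrow>diag_mat ((c * c) \<cdot>\<^sub>m 1\<^sub>m d). [:- a, 1:])"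
    by (rule char_poly_upper_triangular[of _ d]) (auto simp: upper_triangular_def)
  also have "diag_mat ((c * c) \<cdot>\<^sub>m 1\<^sub>m d) = replicate d (c * c)"
    by (rule nth_equalityI) (auto simp: diag_mat_def)
  finally have "proots (char_poly ((c * c) \<cdot>\<^sub>m 1\<^sub>m d)) = replicate_mset d (c * c)"
    by (simp add: prod_list_replicate proots_power)
  moreover have "sorted_list_of_multiset (replicate_mset d (c * c)) = replicate d (c * c)"
    using sorted_list_of_multiset_mset[of "replicate d (c * c)"] by (simp add: sorted_sort_id)
  ultimately show ?thesis by (simp add: singular_values_def gram)
qed

lemma (in group) projective_anosov_finite_ratio_le_one:
  assumes "finite_generating_set G S" and "projective_anosov G S d \<rho>"
  shows "finite {g \<in> carrier G. sigma 1 (\<rho> g) / sigma 2 (\<rho> g) \<le> 1}"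
proof -
  obtain C a where "C > 0" "a > 0" and anosov: "\<And>g. g \<in> carrier G \<Longrightarrow>
      C * exp (a * real (word_length G S g)) \<le> sigma 1 (\<rho> g) / sigma 2 (\<rho> g)"
    using assms(2) unfolding projective_anosov_def by blast
  obtain R :: nat where R: "ln (1 / C) / a \<le> R" using real_arch_simple by blast
  have "word_length G S g \<le> R" if "g \<in> carrier G" "sigma 1 (\<rho> g) / sigma 2 (\<rho> g) \<le> 1" for g
  proof -
    have "exp (a * real (word_length G S g)) \<le> exp (ln (1 / C))"
      using anosov[OF that(1)] that(2) \<open>C > 0\<close> by (simp add: field_simps)
    then have "a * real (word_length G S g) \<le> ln (1 / C)" by simp
    also have "\<dots> \<le> a * R" using R \<open>a > 0\<close> by (simp add: field_simps)
    finally show ?thesis using \<open>a > 0\<close> by simp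
  qed
  then have "{g \<in> carrier G. sigma 1 (\<rho> g) / sigma 2 (\<rho> g) \<le> 1}
      \<subseteq> {g \<in> carrier G. word_length G S g \<le> R}" by auto
  then show ?thesis using finite_word_length_le[OF assms(1)] by (rule finite_subset)
qed

lemma (in group) projective_anosov_nonscalar:
  assumes "torsion_free G" and "finite_generating_set G S" and "projective_anosov G S d \<rho>"
    and "g \<in> carrier G" and "g \<noteq> \<one>"
  shows "\<rho> g \<noteq> c \<cdot>\<^sub>m 1\<^sub>m d"
proof
  assume "\<rho> g = c \<cdot>\<^sub>m 1\<^sub>m d"
  have "d \<ge> 2" and hom: "\<And>x y. x \<in> carrier G \<Longrightarrow> y \<in> carrier G \<Longrightarrow> \<rho> (x \<otimes> y) = \<rho> x * \<rho> y"
    using assms(3) unfolding projective_anosov_def GL_rep_def by auto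
  define T where "T = {h \<in> carrier G. \<exists>c. \<rho> h = c \<cdot>\<^sub>m 1\<^sub>m d}"
  have "T \<subseteq> {g \<in> carrier G. sigma 1 (\<rho> g) / sigma 2 (\<rho> g) \<le> 1}"
    using \<open>d \<ge> 2\<close> by (auto simp: T_def sigma_def singular_values_smult_one)
  then have "finite T"
    using projective_anosov_finite_ratio_le_one[OF assms(2,3)] by (rule finite_subset)
  have "g [^] Suc n \<in> T" for n
  proof (induction n)
    case 0
    show ?case using \<open>g \<in> carrier G\<close> \<open>\<rho> g = c \<cdot>\<^sub>m 1\<^sub>m d\<close> by (auto simp: T_def)
  next
    case (Suc n)
    then obtain c' where "g [^] Suc n \<in> carrier G" "\<rho> (g [^] Suc n) = c' \<cdot>\<^sub>m 1\<^sub>m d"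
      by (auto simp: T_def)
    then have "\<rho> (g [^] Suc (Suc n)) = (c' * c) \<cdot>\<^sub>m 1\<^sub>m d"
      using \<open>g \<in> carrier G\<close> \<open>\<rho> g = c \<cdot>\<^sub>m 1\<^sub>m d\<close>
      by (simp add: hom smult_one_mult_smult_one del: nat_pow_Suc2)
    then show ?case using \<open>g \<in> carrier G\<close> by (auto simp: T_def)
  qed
  moreover have "inj (\<lambda>n. g [^] Suc n)"
    using inj_compose[OF torsion_free_inj_pow[OF assms(1,4,5)] inj_Suc] by (simp add: comp_def)
  ultimately have "finite (UNIV :: nat set)"
    using \<open>finite T\<close> by (metis finite_imageD finite_subset image_subsetI)
  then show False by simp
qed

theorem proposition3p1:
  fixes G :: "('g, 'b) monoid_scheme" and S :: "'g set" and w :: 'g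
    and d :: nat and \<rho> :: "'g \<Rightarrow> real mat"
  assumes "group G"
    and "word_hyperbolic G S"
    and "torsion_free G"
    and "maximal_cyclic G w"
    and "projective_anosov G S d \<rho>"
  shows "\<exists>h hinv. h \<in> carrier_mat d d \<and> hinv \<in> carrier_mat d d \<and>
           h * hinv = 1\<^sub>m d \<and> hinv * h = 1\<^sub>m d \<and>
           (\<forall>g \<in> carrier G - generate G {w}.
              (h * \<rho> g * hinv) $$ (0, 0) \<noteq> 0 \<and>
              (h * \<rho> g * hinv) $$ (0, d - 1) \<noteq> 0 \<and>
              (h * \<rho> g * hinv) $$ (d - 1, 0) \<noteq> 0 \<and>
              (h * \<rho> g * hinv) $$ (d - 1, d - 1) \<noteq> 0)"
proof -
  have fg: "finite_generating_set G S" using assms(2) unfolding word_hyperbolic_def by blast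
  have "d \<ge> 2" and rep: "\<And>g. g \<in> carrier G \<Longrightarrow> \<rho> g \<in> carrier_mat d d"
    using assms(5) unfolding projective_anosov_def GL_rep_def by auto
  define \<A> where "\<A> = \<rho> ` (carrier G - {\<one>\<^bsub>G\<^esub>})"
  have "countable \<A>"
    using group.countable_carrier[OF assms(1) fg] unfolding \<A>_def by (simp add: countable_subset)
  moreover have "\<A> \<subseteq> carrier_mat d d" using rep unfolding \<A>_def by auto
  moreover have "\<exists>B. similar_mat B A \<and> B $$ (i, j) \<noteq> 0" if "A \<in> \<A>" "i < d" "j < d" for A i j
    using that rep group.projective_anosov_nonscalar[OF assms(1,3) fg assms(5)]
    unfolding \<A>_def by (auto intro!: ex_similar_mat_entry_nonzero)
  ultimately obtain h hinv where h: "h \<in> carrier_mat d d" "hinv \<in> carrier_mat d d"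
    "h * hinv = 1\<^sub>m d" "hinv * h = 1\<^sub>m d"
    and entries: "\<forall>A\<in>\<A>. \<forall>i<d. \<forall>j<d. (h * A * hinv) $$ (i, j) \<noteq> 0"
    using ex_conjugate_entries_nonzero[of \<A> d] by blast
  have "(h * \<rho> g * hinv) $$ (i, j) \<noteq> 0" if "g \<in> carrier G - generate G {w}" "i < d" "j < d"
    for g i j
  proof -
    have "\<rho> g \<in> \<A>" using that(1) generate.one[of G "{w}"] unfolding \<A>_def by auto
    with entries that(2,3) show ?thesis by blast
  qed
  moreover have "0 < d" "d - 1 < d" using \<open>d \<ge> 2\<close> by auto
  ultimately show ?thesis using h by blast
qed

end
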